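(* Let $G$ be a connected finite simple graph with vertex set $[n]$. Then the connected subgraph arrangement $\mathcal{A}_G$ in $\mathbb{Q}^n$ is projectively unique: for every hyperplane arrangement $\mathcal{C}$ in $\mathbb{Q}^n$ whose intersection lattice $L(\mathcal{C})$ is isomorphic as a poset to $L(\mathcal{A}_G)$, there exists $\varphi\in \mathrm{GL}(\mathbb{Q}^n)$ with $\mathcal{C}=\{\varphi(H)\mid H\in\mathcal{A}_G\}$.
   Context: Let $G=(N,E)$ be a finite simple graph with vertex set $N=[n]=\{1,\dots,n\}$. For $\varnothing\neq I\subseteq N$, $G[I]$ denotes the induced subgraph on $I$, and $H_I:=\ker\big(\sum_{i\in I}x_i\big)$, where $x_1,\dots,x_n$ are the coordinate functions on $\mathbb{K}^n$ for a field $\mathbb{K}$. The connected subgraph arrangement is $\mathcal{A}_G(\mathbb{K}):=\{H_I\mid \varnothing\neq I\subseteq N,\ G[I]\text{ connected}\}$, a central hyperplane arrangement in $\mathbb{K}^n$; $\mathcal{A}_G:=\mathcal{A}_G(\mathbb{Q})$. The intersection lattice $L(\mathcal{A})$ of an arrangement is the set of all intersections of subsets of $\mathcal{A}$ (including $V$ itself), ordered by reverse inclusion. *)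

theory Defs
  imports Main "HOL.Rat"
begin

text \<open>Vertices of the graph are the elements of a finite type 'n (playing the role of [n]);
  vectors of Q^n are functions 'n \<Rightarrow> rat.\<close>

definition simple_graph :: "('n \<Rightarrow> 'n \<Rightarrow> bool) \<Rightarrow> bool" where
  "simple_graph E \<longleftrightarrow> (\<forall>u v. E u v \<longrightarrow> E v u) \<and> (\<forall>v. \<not> E v v)"

definition graph_connected :: "('n \<Rightarrow> 'n \<Rightarrow> bool) \<Rightarrow> bool" where
  "graph_connected E \<longleftrightarrow> (\<forall>u v. E\<^sup>*\<^sup>* u v)"

definition induced_connected :: "('n \<Rightarrow> 'n \<Rightarrow> bool) \<Rightarrow> 'n set \<Rightarrow> bool" where
  "induced_connected E I \<longleftrightarrow> I \<noteq> {} \<and>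
     (\<forall>u\<in>I. \<forall>v\<in>I. (\<lambda>x y. x \<in> I \<and> y \<in> I \<and> E x y)\<^sup>*\<^sup>* u v)"

definition H_of :: "'n set \<Rightarrow> ('n::finite \<Rightarrow> rat) set" where
  "H_of I = {x. (\<Sum>i\<in>I. x i) = 0}"

definition conn_subgraph_arr :: "('n::finite \<Rightarrow> 'n \<Rightarrow> bool) \<Rightarrow> ('n \<Rightarrow> rat) set set" where
  "conn_subgraph_arr E = {H_of I | I. I \<noteq> {} \<and> induced_connected E I}"

definition hyperplane :: "('n::finite \<Rightarrow> rat) set \<Rightarrow> bool" where
  "hyperplane H \<longleftrightarrow> (\<exists>a::'n \<Rightarrow> rat. a \<noteq> (\<lambda>_. 0) \<and> H = {x. (\<Sum>i\<in>UNIV. a i * x i) = 0})"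

definition arrangement :: "('n::finite \<Rightarrow> rat) set set \<Rightarrow> bool" where
  "arrangement A \<longleftrightarrow> finite A \<and> (\<forall>H\<in>A. hyperplane H)"

definition intersection_lattice :: "'a set set \<Rightarrow> 'a set set" where
  "intersection_lattice A = {\<Inter> S | S. S \<subseteq> A}"

definition lattice_iso :: "'a set set \<Rightarrow> 'b set set \<Rightarrow> bool" where
  "lattice_iso L M \<longleftrightarrow> (\<exists>f. bij_betw f L M \<and>
      (\<forall>X\<in>L. \<forall>Y\<in>L. (Y \<subseteq> X \<longleftrightarrow> f Y \<subseteq> f X)))"

definition linear_map :: "(('n \<Rightarrow> rat) \<Rightarrow> ('n \<Rightarrow> rat)) \<Rightarrow> bool" where
  "linear_map f \<longleftrightarrow> (\<forall>x y. f (\<lambda>i. x i + y i) = (\<lambda>i. f x i + f y i)) \<and>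
                    (\<forall>c x. f (\<lambda>i. c * x i) = (\<lambda>i. c * f x i))"

definition GL :: "(('n \<Rightarrow> rat) \<Rightarrow> ('n \<Rightarrow> rat)) set" where
  "GL = {f. linear_map f \<and> bij f}"

end

theory Submission
  imports Defs "HOL-Analysis.Analysis"
begin

text \<open>
  An isomorphism of intersection lattices maps hyperplanes (the coatoms) to hyperplanes and
  preserves which intersections of hyperplanes lie in which hyperplane. Since G[{i}] and
  G = G[N] are connected, A_G contains the n coordinate hyperplanes H_{i} together with H_N.
  Choose linear forms c_i cutting out the images of H_{i}; the dependencies among the H_{i}
  force them to be a basis, with dual basis x_j. The form cutting out the image of H_N takes
  a nonzero value \<mu>_j at each x_j, as otherwise H_N and the H_{i} with i \<noteq> j would
  cut out a subspace of H_{j}. Finally every H_I is the unique hyperplane containing both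
  the intersection of the H_{i}, i \<in> I, and the intersection of H_N with the H_{i},
  i \<notin> I; transporting this, the image of H_I is cut out by the sum over i \<in> I of
  \<mu>_i c_i. Hence the linear map sending e_k to x_k / \<mu>_k realizes the isomorphism.
  Neither the simplicity of G nor the connectivity of other induced subgraphs plays a role.
\<close>

section \<open>Linear forms on Q^n\<close>

definition lform :: "('n::finite \<Rightarrow> rat) \<Rightarrow> ('n \<Rightarrow> rat) \<Rightarrow> rat" where
  "lform a x = (\<Sum>i\<in>UNIV. a i * x i)"

definition lker :: "('n::finite \<Rightarrow> rat) \<Rightarrow> ('n \<Rightarrow> rat) set" where
  "lker a = {x. lform a x = 0}"

definition unit_vec :: "'n \<Rightarrow> 'n \<Rightarrow> rat" where
  "unit_vec j = (\<lambda>i. if i = j then 1 else 0)"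

lemma hyperplane_iff_lker: "hyperplane H \<longleftrightarrow> (\<exists>a. a \<noteq> (\<lambda>_. 0) \<and> H = lker a)"
  by (simp add: hyperplane_def lker_def lform_def)

lemma lform_unit_vec [simp]: "lform a (unit_vec j) = a j"
  by (simp add: lform_def unit_vec_def if_distrib cong: if_cong)

lemma lform_diff: "lform a (\<lambda>i. x i - y i) = lform a x - lform a y"
  by (simp add: lform_def sum_subtractf algebra_simps)

lemma lform_scale: "lform a (\<lambda>i. s * x i) = s * lform a x"
  by (simp add: lform_def sum_distrib_left algebra_simps)

lemma lform_sum: "lform a (\<lambda>i. \<Sum>k\<in>K. f k i) = (\<Sum>k\<in>K. lform a (f k))"
  by (simp add: lform_def sum_distrib_left sum.swap[of _ K])

lemma lker_neq_UNIV: "a \<noteq> (\<lambda>_. 0) \<Longrightarrow> lker a \<noteq> UNIV"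
  by (metis (mono_tags) UNIV_I lform_unit_vec lker_def mem_Collect_eq)

text \<open>Writing a(u) = 1, every z satisfies b(z) = a(z) b(u), because z - a(z) u lies in the
  kernel of a.\<close>
lemma lker_subset_imp_eq:
  assumes a: "a \<noteq> (\<lambda>_. 0)" and b: "b \<noteq> (\<lambda>_. 0)" and sub: "lker a \<subseteq> lker b"
  shows "lker a = lker b"
proof -
  obtain k where k: "a k \<noteq> 0" using a by auto
  define u where "u = (\<lambda>i. (1 / a k) * unit_vec k i)"
  have "lform a u = (1 / a k) * lform a (unit_vec k)" unfolding u_def by (rule lform_scale)
  hence a_u: "lform a u = 1" using k by simp
  have b_factor: "lform b z = lform a z * lform b u" for z
  proof -
    have "(\<lambda>i. z i - lform a z * u i) \<in> lker a"
      by (simp add: lker_def lform_diff lform_scale a_u)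
    hence "lform b (\<lambda>i. z i - lform a z * u i) = 0" using sub by (auto simp: lker_def)
    thus ?thesis by (simp add: lform_diff lform_scale)
  qed
  obtain k' where "b k' \<noteq> 0" using b by auto
  hence "lform b u \<noteq> 0" using b_factor[of "unit_vec k'"] by auto
  hence "lker b \<subseteq> lker a"
    by (metis (mono_tags) b_factor lker_def mem_Collect_eq mult_eq_0_iff subsetI)
  with sub show ?thesis by blast
qed

lemma H_of_eq_lker: "H_of (I :: 'n::finite set) = lker (\<lambda>i. if i \<in> I then 1 else 0)"
proof -
  have "lform (\<lambda>i. if i \<in> I then 1 else 0) x = sum x I" for x :: "'n \<Rightarrow> rat"
    unfolding lform_def by (simp add: if_distrib[of "\<lambda>t. t * _"] sum.If_cases)
  thus ?thesis by (simp add: H_of_def lker_def)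
qed

lemma hyperplane_H_of: "I \<noteq> {} \<Longrightarrow> hyperplane (H_of I)"
  unfolding hyperplane_iff_lker H_of_eq_lker
  by (rule exI[of _ "\<lambda>i. if i \<in> I then 1 else 0"]) (auto simp: fun_eq_iff)

text \<open>Matrix form of the hypothesis: C X = 1 for the matrices with rows c_i and columns
  x_j, so X C = 1 as well, which is the expansion below.\<close>
lemma dual_basis_expansion:
  fixes c x :: "'n::finite \<Rightarrow> 'n \<Rightarrow> rat"
  assumes dual: "\<And>i j. lform (c i) (x j) = (if i = j then 1 else 0)"
  shows "z = (\<lambda>i. \<Sum>k\<in>UNIV. lform (c k) z * x k i)"
proof
  fix i
  define Cm :: "rat^'n^'n" where "Cm = (\<chi> i k. c i k)"
  define Xm :: "rat^'n^'n" where "Xm = (\<chi> k j. x j k)"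
  have "Cm ** Xm = mat 1"
    using dual by (simp add: Cm_def Xm_def matrix_matrix_mult_def mat_def vec_eq_iff lform_def)
  hence "Xm ** Cm = mat 1" using matrix_left_right_inverse by blast
  hence XC: "(\<Sum>k\<in>UNIV. x k i * c k j) = (if i = j then 1 else 0)" for j
    by (auto simp: Cm_def Xm_def matrix_matrix_mult_def mat_def vec_eq_iff)
  have "(\<Sum>k\<in>UNIV. lform (c k) z * x k i) = (\<Sum>k\<in>UNIV. \<Sum>j\<in>UNIV. z j * (x k i * c k j))"
    by (simp add: lform_def sum_distrib_left sum_distrib_right mult_ac)
  also have "\<dots> = (\<Sum>j\<in>UNIV. z j * (\<Sum>k\<in>UNIV. x k i * c k j))"
    by (subst sum.swap) (simp add: sum_distrib_left)
  also have "\<dots> = z i" by (simp add: XC if_distrib cong: if_cong)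
  finally show "z i = (\<Sum>k\<in>UNIV. lform (c k) z * x k i)" by simp
qed

lemma lform_dual_basis_expansion:
  fixes c x :: "'n::finite \<Rightarrow> 'n \<Rightarrow> rat"
  assumes "\<And>i j. lform (c i) (x j) = (if i = j then 1 else 0)"
  shows "lform a z = (\<Sum>k\<in>UNIV. lform (c k) z * lform a (x k))"
  by (subst dual_basis_expansion[OF assms, of z]) (simp add: lform_sum lform_scale)

definition dual_basis_map ::
    "('n \<Rightarrow> 'n \<Rightarrow> rat) \<Rightarrow> ('n \<Rightarrow> rat) \<Rightarrow> ('n::finite \<Rightarrow> rat) \<Rightarrow> 'n \<Rightarrow> rat"
  where "dual_basis_map x \<mu> y = (\<lambda>i. \<Sum>k\<in>UNIV. (y k / \<mu> k) * x k i)"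

lemma dual_basis_map_inverse:
  assumes dual: "\<And>i j. lform (c i) (x j) = (if i = j then 1 else 0)"
    and \<mu>: "\<And>k. \<mu> k \<noteq> 0"
  shows "dual_basis_map x \<mu> (\<lambda>k. \<mu> k * lform (c k) z) = z"
    and "(\<lambda>k. \<mu> k * lform (c k) (dual_basis_map x \<mu> y)) = y"
proof -
  have "dual_basis_map x \<mu> (\<lambda>k. \<mu> k * lform (c k) z)
      = (\<lambda>i. \<Sum>k\<in>UNIV. lform (c k) z * x k i)"
    by (simp add: dual_basis_map_def \<mu>)
  also have "\<dots> = z" by (rule dual_basis_expansion[OF dual, symmetric])
  finally show "dual_basis_map x \<mu> (\<lambda>k. \<mu> k * lform (c k) z) = z" .
  have "lform (c i) (dual_basis_map x \<mu> y) = y i / \<mu> i" for i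
    unfolding dual_basis_map_def lform_sum lform_scale
    by (simp add: dual if_distrib cong: if_cong)
  thus "(\<lambda>k. \<mu> k * lform (c k) (dual_basis_map x \<mu> y)) = y" by (simp add: \<mu>)
qed

lemma dual_basis_map_in_GL:
  assumes "\<And>i j. lform (c i) (x j) = (if i = j then 1 else 0)" and "\<And>k. \<mu> k \<noteq> 0"
  shows "dual_basis_map x \<mu> \<in> GL"
proof -
  have "bij (dual_basis_map x \<mu>)"
    by (rule o_bij[of "\<lambda>z k. \<mu> k * lform (c k) z"])
      (simp_all add: fun_eq_iff dual_basis_map_inverse[OF assms])
  moreover have "dual_basis_map x \<mu> (\<lambda>i. u i + v i)
      = (\<lambda>i. dual_basis_map x \<mu> u i + dual_basis_map x \<mu> v i)" for u v
    unfolding dual_basis_map_def by (simp add: add_divide_distrib distrib_right sum.distrib)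
  moreover have "dual_basis_map x \<mu> (\<lambda>i. s * u i) = (\<lambda>i. s * dual_basis_map x \<mu> u i)" for s u
    unfolding dual_basis_map_def by (rule ext) (auto simp: sum_distrib_left intro!: sum.cong)
  ultimately show ?thesis by (simp add: GL_def linear_map_def)
qed

lemma dual_basis_map_image_H_of:
  assumes "\<And>i j. lform (c i) (x j) = (if i = j then 1 else 0)" and "\<And>k. \<mu> k \<noteq> 0"
  shows "dual_basis_map x \<mu> ` H_of I = {z. (\<Sum>k\<in>I. \<mu> k * lform (c k) z) = 0}"
proof -
  let ?\<psi> = "\<lambda>z k. \<mu> k * lform (c k) z"
  have "dual_basis_map x \<mu> ` H_of I = {z. ?\<psi> z \<in> H_of I}"
    using dual_basis_map_inverse[OF assms] by (auto intro: image_eqI[where x = "?\<psi> _"])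
  thus ?thesis by (simp add: H_of_def)
qed

section \<open>Hyperplanes as coatoms of the intersection lattice\<close>

definition coatom :: "'a set set \<Rightarrow> 'a set \<Rightarrow> bool" where
  "coatom L X \<longleftrightarrow> X \<in> L \<and> X \<noteq> UNIV \<and> (\<forall>Y\<in>L. X \<subseteq> Y \<longrightarrow> Y = X \<or> Y = UNIV)"

lemma UNIV_in_intersection_lattice: "UNIV \<in> intersection_lattice A"
  unfolding intersection_lattice_def by (auto intro!: exI[of _ "{}"])

lemma Inter_in_intersection_lattice: "S \<subseteq> A \<Longrightarrow> \<Inter>S \<in> intersection_lattice A"
  unfolding intersection_lattice_def by auto

lemma in_intersection_lattice: "H \<in> A \<Longrightarrow> H \<in> intersection_lattice A"
  using Inter_in_intersection_lattice[of "{H}" A] by simp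

lemma coatom_intersection_lattice_iff:
  fixes A :: "('n::finite \<Rightarrow> rat) set set"
  assumes hyp: "\<And>H. H \<in> A \<Longrightarrow> hyperplane H"
  shows "coatom (intersection_lattice A) X \<longleftrightarrow> X \<in> A"
proof
  assume X: "coatom (intersection_lattice A) X"
  then obtain T where T: "T \<subseteq> A" "X = \<Inter>T"
    unfolding coatom_def intersection_lattice_def by auto
  have "T \<noteq> {}" using X T(2) by (auto simp: coatom_def)
  then obtain H where H: "H \<in> T" by blast
  with T(1) have HA: "H \<in> A" by blast
  have "H \<noteq> UNIV" using hyp[OF HA] lker_neq_UNIV unfolding hyperplane_iff_lker by blast
  moreover have "X \<subseteq> H" using T(2) H by blast
  ultimately have "H = X"
    using X in_intersection_lattice[OF HA] unfolding coatom_def by blast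
  with HA show "X \<in> A" by simp
next
  assume X: "X \<in> A"
  then obtain a where a: "a \<noteq> (\<lambda>_. 0)" "X = lker a" using hyp hyperplane_iff_lker by blast
  have "Y = X \<or> Y = UNIV" if Y: "Y \<in> intersection_lattice A" "X \<subseteq> Y" for Y
  proof -
    obtain T where T: "T \<subseteq> A" "Y = \<Inter>T" using Y(1) unfolding intersection_lattice_def by blast
    have "H = X" if H: "H \<in> T" for H
    proof -
      obtain b where b: "b \<noteq> (\<lambda>_. 0)" "H = lker b"
        using H T(1) hyp hyperplane_iff_lker by blast
      have "X \<subseteq> H" using Y(2) T(2) H by blast
      thus "H = X" using lker_subset_imp_eq[OF a(1) b(1)] a(2) b(2) by simp
    qed
    hence "T \<subseteq> {X}" by blast
    hence "Y = UNIV \<or> Y = X" using T(2) by (auto simp: subset_singleton_iff)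
    thus ?thesis by blast
  qed
  moreover have "X \<noteq> UNIV" using lker_neq_UNIV[OF a(1)] a(2) by simp
  ultimately show "coatom (intersection_lattice A) X"
    using in_intersection_lattice[OF X] unfolding coatom_def by blast
qed

lemma order_iso_coatom:
  assumes F: "bij_betw F L M"
    and ord: "\<And>X Y. X \<in> L \<Longrightarrow> Y \<in> L \<Longrightarrow> Y \<subseteq> X \<longleftrightarrow> F Y \<subseteq> F X"
    and UL: "UNIV \<in> L" and UM: "UNIV \<in> M" and X: "coatom L X"
  shows "coatom M (F X)"
proof -
  have XL: "X \<in> L" "X \<noteq> UNIV" using X unfolding coatom_def by blast+
  obtain U where U: "U \<in> L" "F U = UNIV" using UM F by (auto simp: bij_betw_def)
  have FU: "F UNIV = UNIV" using ord[OF UL U(1)] U by auto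
  have "F X \<noteq> UNIV" using ord[OF XL(1) UL] FU XL(2) by auto
  moreover have "Y = F X \<or> Y = UNIV" if Y: "Y \<in> M" "F X \<subseteq> Y" for Y
  proof -
    obtain Y' where Y': "Y' \<in> L" "Y = F Y'" using Y(1) F by (auto simp: bij_betw_def)
    have "X \<subseteq> Y'" using ord[OF Y'(1) XL(1)] Y Y' by simp
    hence "Y' = X \<or> Y' = UNIV" using X Y'(1) unfolding coatom_def by blast
    thus ?thesis using Y' FU by auto
  qed
  ultimately show ?thesis using F XL(1) unfolding coatom_def bij_betw_def by blast
qed

lemma order_iso_Inter:
  assumes F: "bij_betw F L M"
    and ord: "\<And>X Y. X \<in> L \<Longrightarrow> Y \<in> L \<Longrightarrow> Y \<subseteq> X \<longleftrightarrow> F Y \<subseteq> F X"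
    and S: "S \<subseteq> L" "\<Inter>S \<in> L" "\<Inter>(F ` S) \<in> M"
  shows "F (\<Inter>S) = \<Inter>(F ` S)"
proof
  show "F (\<Inter>S) \<subseteq> \<Inter>(F ` S)" using ord S(1,2) by blast
  obtain Z where Z: "Z \<in> L" "F Z = \<Inter>(F ` S)" using S(3) F by (auto simp: bij_betw_def)
  have "Z \<subseteq> H" if "H \<in> S" for H using ord[of H Z] Z S(1) that by blast
  hence "Z \<subseteq> \<Inter>S" by blast
  thus "\<Inter>(F ` S) \<subseteq> F (\<Inter>S)" using ord[OF S(2) Z(1)] Z(2) by simp
qed

lemma lattice_iso_hyperplane_correspondence:
  fixes A C :: "('n::finite \<Rightarrow> rat) set set"
  assumes hypC: "\<forall>H\<in>C. hyperplane H" and hypA: "\<forall>H\<in>A. hyperplane H"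
    and iso: "lattice_iso (intersection_lattice C) (intersection_lattice A)"
  obtains h where "h ` A = C"
    and "\<And>S H. S \<subseteq> A \<Longrightarrow> H \<in> A \<Longrightarrow> \<Inter>S \<subseteq> H \<longleftrightarrow> \<Inter>(h ` S) \<subseteq> h H"
proof -
  let ?LC = "intersection_lattice C" and ?LA = "intersection_lattice A"
  obtain f where f: "bij_betw f ?LC ?LA"
    and ord: "\<And>X Y. X \<in> ?LC \<Longrightarrow> Y \<in> ?LC \<Longrightarrow> Y \<subseteq> X \<longleftrightarrow> f Y \<subseteq> f X"
    using iso unfolding lattice_iso_def by (elim exE conjE) (rule that, simp_all)
  define h where "h = inv_into ?LC f"
  have h: "bij_betw h ?LA ?LC" unfolding h_def by (rule bij_betw_inv_into[OF f])
  have fh: "f (h X) = X" if "X \<in> ?LA" for X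
    unfolding h_def using f that by (rule bij_betw_inv_into_right)
  have hf: "h (f Y) = Y" if "Y \<in> ?LC" for Y
    unfolding h_def using f that by (rule bij_betw_inv_into_left)
  have hord: "Y \<subseteq> X \<longleftrightarrow> h Y \<subseteq> h X" if X: "X \<in> ?LA" and Y: "Y \<in> ?LA" for X Y
  proof -
    have "h X \<in> ?LC" "h Y \<in> ?LC" using h X Y by (auto simp: bij_betw_def)
    thus ?thesis using ord[of "h X" "h Y"] fh[OF X] fh[OF Y] by simp
  qed
  have coatom_C: "coatom ?LC X \<longleftrightarrow> X \<in> C" for X
    by (rule coatom_intersection_lattice_iff[OF bspec[OF hypC]])
  have coatom_A: "coatom ?LA X \<longleftrightarrow> X \<in> A" for X
    by (rule coatom_intersection_lattice_iff[OF bspec[OF hypA]])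
  have hA: "h H \<in> C" if "H \<in> A" for H
    using order_iso_coatom[OF h hord UNIV_in_intersection_lattice UNIV_in_intersection_lattice]
      that coatom_A coatom_C by blast
  have "C \<subseteq> h ` A"
  proof
    fix K assume K: "K \<in> C"
    hence "f K \<in> A"
      using order_iso_coatom[OF f ord UNIV_in_intersection_lattice UNIV_in_intersection_lattice]
        coatom_A coatom_C by blast
    moreover have "h (f K) = K" using hf in_intersection_lattice[OF K] by blast
    ultimately show "K \<in> h ` A" by (metis imageI)
  qed
  with hA have "h ` A = C" by blast
  moreover have "\<Inter>S \<subseteq> H \<longleftrightarrow> \<Inter>(h ` S) \<subseteq> h H" if S: "S \<subseteq> A" and H: "H \<in> A" for S H
  proof -
    have "h ` S \<subseteq> C" using S hA by blast
    hence "h (\<Inter>S) = \<Inter>(h ` S)"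
      using S in_intersection_lattice
      by (intro order_iso_Inter[OF h hord]) (blast intro: Inter_in_intersection_lattice)+
    thus ?thesis
      using hord[OF in_intersection_lattice[OF H] Inter_in_intersection_lattice[OF S]] by simp
  qed
  ultimately show ?thesis using that by blast
qed

section \<open>Arrangements containing the coordinate hyperplanes and H_N\<close>

lemma Inter_H_of_singletons_subset: "\<Inter>((\<lambda>i. H_of {i}) ` I) \<subseteq> H_of I"
  by (auto simp: H_of_def)

lemma H_of_UNIV_Inter_H_of_singletons_subset:
  "\<Inter>(insert (H_of UNIV) ((\<lambda>i. H_of {i}) ` (- I))) \<subseteq> H_of (I :: 'n::finite set)"
proof
  fix y assume y: "y \<in> \<Inter>(insert (H_of UNIV) ((\<lambda>i. H_of {i}) ` (- I)))"
  have "sum y (- I) = 0" using y by (intro sum.neutral) (auto simp: H_of_def)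
  moreover have "sum y UNIV = 0" using y by (simp add: H_of_def)
  moreover have "sum y UNIV = sum y (- I) + sum y I"
    by (metis Compl_eq_Diff_UNIV finite sum.subset_diff top_greatest)
  ultimately show "y \<in> H_of I" by (simp add: H_of_def)
qed

text \<open>In the notation of the proof idea, c_i = coord_form i, x_j = dual_vec j and
  \<mu>_j = weight j.\<close>
locale coordinate_arrangement_map =
  fixes A :: "('n::finite \<Rightarrow> rat) set set" and h :: "('n \<Rightarrow> rat) set \<Rightarrow> ('n \<Rightarrow> rat) set"
  assumes H_of_singleton_in: "\<And>i. H_of {i} \<in> A"
    and H_of_UNIV_in: "H_of UNIV \<in> A"
    and hyperplane_h: "\<And>H. H \<in> A \<Longrightarrow> hyperplane (h H)"
    and Inter_subset_iff: "\<And>S H. S \<subseteq> A \<Longrightarrow> H \<in> A \<Longrightarrow> \<Inter>S \<subseteq> H \<longleftrightarrow> \<Inter>(h ` S) \<subseteq> h H"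
begin

definition form :: "('n \<Rightarrow> rat) set \<Rightarrow> 'n \<Rightarrow> rat" where
  "form H = (SOME a. a \<noteq> (\<lambda>_. 0) \<and> h H = lker a)"

lemma form_nonzero: "H \<in> A \<Longrightarrow> form H \<noteq> (\<lambda>_. 0)"
  and h_eq_lker_form: "H \<in> A \<Longrightarrow> h H = lker (form H)"
  using someI_ex[OF hyperplane_h[unfolded hyperplane_iff_lker]] unfolding form_def by blast+

definition coord_form :: "'n \<Rightarrow> 'n \<Rightarrow> rat" where
  "coord_form i = form (H_of {i})"

lemma h_H_of_singleton: "h (H_of {i}) = lker (coord_form i)"
  by (simp add: coord_form_def h_eq_lker_form H_of_singleton_in)

lemma singletons_subset: "(\<lambda>i. H_of {i}) ` I \<subseteq> A"
  using H_of_singleton_in by blast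

lemma mem_h_H_of_support:
  assumes "H_of I \<in> A" and "\<And>i. i \<in> I \<Longrightarrow> lform (coord_form i) y = 0"
  shows "y \<in> h (H_of I)"
proof -
  have "\<Inter>(h ` (\<lambda>i. H_of {i}) ` I) \<subseteq> h (H_of I)"
    by (rule iffD1[OF Inter_subset_iff[OF singletons_subset assms(1)] Inter_H_of_singletons_subset])
  moreover have "y \<in> \<Inter>(h ` (\<lambda>i. H_of {i}) ` I)"
    using assms(2) by (auto simp: h_H_of_singleton lker_def)
  ultimately show ?thesis by blast
qed

lemma mem_h_H_of_cosupport:
  assumes "H_of I \<in> A" and "y \<in> h (H_of UNIV)"
    and "\<And>i. i \<notin> I \<Longrightarrow> lform (coord_form i) y = 0"
  shows "y \<in> h (H_of I)"
proof -
  let ?S = "insert (H_of UNIV) ((\<lambda>i. H_of {i}) ` (- I))"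
  have "?S \<subseteq> A" using H_of_UNIV_in singletons_subset by blast
  hence "\<Inter>(h ` ?S) \<subseteq> h (H_of I)"
    by (rule iffD1[OF Inter_subset_iff[OF _ assms(1)] H_of_UNIV_Inter_H_of_singletons_subset])
  moreover have "y \<in> \<Inter>(h ` ?S)"
    using assms(2,3) by (auto simp: h_H_of_singleton lker_def)
  ultimately show ?thesis by blast
qed

lemma exists_dual_vector: "\<exists>y. \<forall>i. lform (coord_form i) y = (if i = j then 1 else 0)"
proof -
  have "unit_vec j \<notin> H_of {j}" by (simp add: H_of_def unit_vec_def)
  moreover have "unit_vec j \<in> \<Inter>((\<lambda>i. H_of {i}) ` (- {j}))"
    by (auto simp: H_of_def unit_vec_def)
  ultimately have "\<not> \<Inter>((\<lambda>i. H_of {i}) ` (- {j})) \<subseteq> H_of {j}" by blast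
  hence "\<not> \<Inter>(h ` (\<lambda>i. H_of {i}) ` (- {j})) \<subseteq> h (H_of {j})"
    by (subst Inter_subset_iff[symmetric, OF singletons_subset H_of_singleton_in])
  then obtain y where y: "y \<in> \<Inter>(h ` (\<lambda>i. H_of {i}) ` (- {j}))" "y \<notin> h (H_of {j})" by blast
  have "lform (coord_form i) y = 0" if "i \<noteq> j" for i
    using y(1) that by (auto simp: h_H_of_singleton lker_def)
  moreover have "lform (coord_form j) y \<noteq> 0" using y(2) by (simp add: h_H_of_singleton lker_def)
  ultimately have "lform (coord_form i) (\<lambda>k. (1 / lform (coord_form j) y) * y k)
      = (if i = j then 1 else 0)" for i
    unfolding lform_scale by simp
  thus ?thesis by blast
qed

definition dual_vec :: "'n \<Rightarrow> 'n \<Rightarrow> rat" where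
  "dual_vec j = (SOME y. \<forall>i. lform (coord_form i) y = (if i = j then 1 else 0))"

lemma lform_coord_form_dual_vec: "lform (coord_form i) (dual_vec j) = (if i = j then 1 else 0)"
  using someI_ex[OF exists_dual_vector[of j]] unfolding dual_vec_def by blast

definition weight :: "'n \<Rightarrow> rat" where
  "weight j = lform (form (H_of UNIV)) (dual_vec j)"

lemma weight_nonzero: "weight j \<noteq> 0"
proof
  assume "weight j = 0"
  hence "dual_vec j \<in> h (H_of UNIV)"
    by (simp add: weight_def h_eq_lker_form H_of_UNIV_in lker_def)
  hence "dual_vec j \<in> h (H_of {j})"
    by (rule mem_h_H_of_cosupport[OF H_of_singleton_in]) (auto simp: lform_coord_form_dual_vec)
  thus False by (simp add: h_H_of_singleton lker_def lform_coord_form_dual_vec)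
qed

text \<open>The form b cutting out h(H_I) vanishes on dual_vec k for k \<notin> I, which lies in the
  image of every H_{i} with i \<in> I; and b(dual_vec k) / weight k is constant on I, because
  dual_vec k / weight k - dual_vec k' / weight k' lies in the image of H_N and of every H_{i}
  with i \<notin> I.\<close>
lemma h_H_of:
  assumes I: "I \<noteq> {}" "H_of I \<in> A"
  shows "h (H_of I) = {z. (\<Sum>k\<in>I. weight k * lform (coord_form k) z) = 0}"
proof -
  define b where "b = form (H_of I)"
  have hI: "h (H_of I) = lker b" by (simp add: b_def h_eq_lker_form I(2))
  have outside: "lform b (dual_vec k) = 0" if "k \<notin> I" for k
  proof -
    have "dual_vec k \<in> h (H_of I)"
      using that by (intro mem_h_H_of_support[OF I(2)]) (auto simp: lform_coord_form_dual_vec)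
    thus ?thesis by (simp add: hI lker_def)
  qed
  have ratio: "lform b (dual_vec k) / weight k = lform b (dual_vec k') / weight k'"
    if "k \<in> I" "k' \<in> I" for k k'
  proof -
    define w where "w = (\<lambda>i. (1 / weight k) * dual_vec k i - (1 / weight k') * dual_vec k' i)"
    have lform_w: "lform a w
        = (1 / weight k) * lform a (dual_vec k) - (1 / weight k') * lform a (dual_vec k')" for a
      unfolding w_def lform_diff lform_scale ..
    have "w \<in> h (H_of UNIV)"
      using weight_nonzero[of k] weight_nonzero[of k']
      by (simp add: h_eq_lker_form H_of_UNIV_in lker_def lform_w weight_def[symmetric])
    hence "w \<in> h (H_of I)"
      using that
      by (intro mem_h_H_of_cosupport[OF I(2)]) (auto simp: lform_w lform_coord_form_dual_vec)
    hence "lform b w = 0" by (simp add: hI lker_def)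
    thus ?thesis by (simp add: lform_w)
  qed
  obtain k0 where k0: "k0 \<in> I" using I(1) by blast
  define t where "t = lform b (dual_vec k0) / weight k0"
  have b_dual_vec: "lform b (dual_vec k) = (if k \<in> I then t * weight k else 0)" for k
    using ratio[OF _ k0, of k] outside[of k] weight_nonzero[of k]
    by (auto simp: t_def field_simps)
  have lform_b: "lform b z = t * (\<Sum>k\<in>I. weight k * lform (coord_form k) z)" for z
    by (simp add: lform_dual_basis_expansion[OF lform_coord_form_dual_vec, of b z] b_dual_vec
        if_distrib sum.If_cases sum_distrib_left mult_ac cong: if_cong)
  have "t \<noteq> 0"
  proof
    assume "t = 0"
    hence "b = (\<lambda>_. 0)" using lform_b[of "unit_vec _"] by auto
    thus False using form_nonzero[OF I(2)] by (simp add: b_def)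
  qed
  thus ?thesis by (auto simp: hI lker_def lform_b)
qed

lemma exists_GL_realization:
  assumes "\<And>H. H \<in> A \<Longrightarrow> \<exists>I. I \<noteq> {} \<and> H = H_of I"
  shows "\<exists>\<phi>\<in>GL. \<forall>H\<in>A. h H = \<phi> ` H"
proof (intro bexI ballI)
  show "dual_basis_map dual_vec weight \<in> GL"
    by (rule dual_basis_map_in_GL[OF lform_coord_form_dual_vec weight_nonzero])
  fix H assume "H \<in> A"
  then obtain I where "I \<noteq> {}" "H = H_of I" using assms by blast
  thus "h H = dual_basis_map dual_vec weight ` H"
    using h_H_of \<open>H \<in> A\<close>
      dual_basis_map_image_H_of[OF lform_coord_form_dual_vec weight_nonzero] by simp
qed

end

section \<open>The connected subgraph arrangement\<close>

lemma conn_subgraph_arr_iff: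
  "H \<in> conn_subgraph_arr E \<longleftrightarrow> (\<exists>I. I \<noteq> {} \<and> induced_connected E I \<and> H = H_of I)"
  by (auto simp: conn_subgraph_arr_def)

lemma H_of_singleton_in_conn_subgraph_arr: "H_of {i} \<in> conn_subgraph_arr E"
  by (auto simp: conn_subgraph_arr_iff induced_connected_def)

lemma H_of_UNIV_in_conn_subgraph_arr:
  "graph_connected E \<Longrightarrow> H_of UNIV \<in> conn_subgraph_arr E"
  by (auto simp: conn_subgraph_arr_iff induced_connected_def graph_connected_def)

lemma hyperplane_conn_subgraph_arr: "\<forall>H\<in>conn_subgraph_arr E. hyperplane H"
  by (auto simp: conn_subgraph_arr_iff intro: hyperplane_H_of)

theorem mainTheorem1:
  fixes E :: "'n::finite \<Rightarrow> 'n \<Rightarrow> bool"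
    and C :: "('n \<Rightarrow> rat) set set"
  assumes "simple_graph E"
    and "graph_connected E"
    and "arrangement C"
    and "lattice_iso (intersection_lattice C) (intersection_lattice (conn_subgraph_arr E))"
  shows "\<exists>\<phi>\<in>GL. C = (\<lambda>H. \<phi> ` H) ` conn_subgraph_arr E"
proof -
  let ?A = "conn_subgraph_arr E"
  have hyperplane_C: "\<forall>H\<in>C. hyperplane H" using assms(3) by (simp add: arrangement_def)
  obtain h where hA: "h ` ?A = C"
    and h_Inter: "\<And>S H. S \<subseteq> ?A \<Longrightarrow> H \<in> ?A \<Longrightarrow> \<Inter>S \<subseteq> H \<longleftrightarrow> \<Inter>(h ` S) \<subseteq> h H"
    using lattice_iso_hyperplane_correspondence
      [OF hyperplane_C hyperplane_conn_subgraph_arr assms(4)] by blast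
  interpret coordinate_arrangement_map ?A h
    using H_of_singleton_in_conn_subgraph_arr H_of_UNIV_in_conn_subgraph_arr[OF assms(2)]
      hyperplane_C hA h_Inter by unfold_locales blast+
  obtain \<phi> where "\<phi> \<in> GL" and "\<forall>H\<in>?A. h H = \<phi> ` H"
    using exists_GL_realization by (auto simp: conn_subgraph_arr_iff)
  moreover have "C = (\<lambda>H. \<phi> ` H) ` ?A"
    using hA \<open>\<forall>H\<in>?A. h H = \<phi> ` H\<close> by (auto intro: image_cong)
  ultimately show ?thesis by blast
qed

end
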